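(* Let $n\ge 2$ and $p>1$, let $h=h^{(n)}$ be the normalized Hermite roots and let $f$ be the monic polynomial with roots $h$. Then the $\ell^p$-contraction ratio $\eta_p:=\|E_n s_n(h)\|_p/\|s_n(h)\|_p$ equals $2^{-1/2}$ for every $p>1$, and consequently the $p$-Stam deficit at the Hermite pair satisfies $g_p(h,h)>0$ for $1<p<2$, $g_2(h,h)=0$, and $g_p(h,h)<0$ for $p>2$. In particular, the $p$-Stam inequality $\Phi_{n,p}(f\boxplus_n g)^{-1/(p-1)}\ge\Phi_{n,p}(f)^{-1/(p-1)}+\Phi_{n,p}(g)^{-1/(p-1)}$ fails for every $p>2$ (witnessed by $f=g$ with roots $h$).
   Context: Score vector: $s_n(\alpha)_i=\sum_{j\ne i}(\alpha_i-\alpha_j)^{-1}$ for simple real roots $\alpha$. $p$-Fisher information: $\Phi_{n,p}(f)=\|s_n(\alpha)\|_p^p$. Finite free additive convolution $f\boxplus_n g$: for $f=\sum(-1)^ka_kx^{n-k}$, $g=\sum(-1)^kb_kx^{n-k}$ monic real-rooted of degree $n$, $f\boxplus_n g=\sum(-1)^kc_kx^{n-k}$ with $c_k=\sum_{i+j=k}\frac{(n-i)!(n-j)!}{n!(n-k)!}a_ib_j$. Root map $\Omega_{\boxplus_n}(\alpha,\beta)$: sorted roots of $f\boxplus_n g$. $h=h^{(n)}$: ordered roots of the probabilists' Hermite polynomial $\mathrm{He}_n$ normalized to mean $0$, variance $1$. Hermite coupling matrix $E_n:=\partial_\alpha\Omega_{\boxplus_n}(\alpha,h)|_{\alpha=h}$;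 at the symmetric point one has $s_n(\Omega_{\boxplus_n}(h,h))=E_n s_n(h)$. $p$-Stam deficit: $g_p(f,g)=\Phi_{n,p}(f\boxplus_n g)^{-1/(p-1)}-\Phi_{n,p}(f)^{-1/(p-1)}-\Phi_{n,p}(g)^{-1/(p-1)}$. *)

theory Defs
  imports "HOL-Analysis.Analysis" "HOL-Computational_Algebra.Polynomial"
begin

text \<open>Vectors in R^n are represented as functions nat => real; only indices i < n matter.\<close>

definition poly_of_roots :: "nat \<Rightarrow> (nat \<Rightarrow> real) \<Rightarrow> real poly" where
  "poly_of_roots n \<alpha> = (\<Prod>i<n. [:- \<alpha> i, 1:])"

definition sorted_roots :: "nat \<Rightarrow> real poly \<Rightarrow> (nat \<Rightarrow> real)" where
  "sorted_roots n P = (SOME \<gamma>. (\<forall>i j. i \<le> j \<and> j < n \<longrightarrow> \<gamma> i \<le> \<gamma> j)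
                        \<and> (\<forall>i. n \<le> i \<longrightarrow> \<gamma> i = 0) \<and> poly_of_roots n \<gamma> = P)"

definition ffconv :: "nat \<Rightarrow> real poly \<Rightarrow> real poly \<Rightarrow> real poly" where
  "ffconv n f g =
     (let a = (\<lambda>k. (-1) ^ k * coeff f (n - k));
          b = (\<lambda>k. (-1) ^ k * coeff g (n - k));
          c = (\<lambda>k. \<Sum>i\<le>k. (fact (n - i) * fact (n - (k - i))) / (fact n * fact (n - k)) * a i * b (k - i))
      in \<Sum>k\<le>n. monom ((-1) ^ k * c k) (n - k))"

definition Omega :: "nat \<Rightarrow> (nat \<Rightarrow> real) \<Rightarrow> (nat \<Rightarrow> real) \<Rightarrow> (nat \<Rightarrow> real)" where
  "Omega n \<alpha> \<beta> = sorted_roots n (ffconv n (poly_of_roots n \<alpha>) (poly_of_roots n \<beta>))"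

fun hermite :: "nat \<Rightarrow> real poly" where
  "hermite 0 = 1"
| "hermite (Suc 0) = [:0, 1:]"
| "hermite (Suc (Suc n)) = [:0, 1:] * hermite (Suc n) - smult (real (Suc n)) (hermite n)"

definition hermite_roots :: "nat \<Rightarrow> (nat \<Rightarrow> real)" where
  "hermite_roots n =
     (let x = sorted_roots n (hermite n);
          \<mu> = (\<Sum>i<n. x i) / real n;
          v = (\<Sum>i<n. (x i - \<mu>)\<^sup>2) / real n
      in (\<lambda>i. if i < n then (x i - \<mu>) / sqrt v else 0))"

definition score :: "nat \<Rightarrow> (nat \<Rightarrow> real) \<Rightarrow> (nat \<Rightarrow> real)" where
  "score n \<alpha> i = (\<Sum>j\<in>{..<n} - {i}. 1 / (\<alpha> i - \<alpha> j))"

definition Phi :: "nat \<Rightarrow> real \<Rightarrow> (nat \<Rightarrow> real) \<Rightarrow> real" where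
  "Phi n p \<alpha> = (\<Sum>i<n. \<bar>score n \<alpha> i\<bar> powr p)"

definition pnorm :: "nat \<Rightarrow> real \<Rightarrow> (nat \<Rightarrow> real) \<Rightarrow> real" where
  "pnorm n p v = (\<Sum>i<n. \<bar>v i\<bar> powr p) powr (1 / p)"

definition Ematrix :: "nat \<Rightarrow> nat \<Rightarrow> nat \<Rightarrow> real" where
  "Ematrix n i j =
     deriv (\<lambda>t. Omega n ((hermite_roots n)(j := hermite_roots n j + t)) (hermite_roots n) i) 0"

definition contraction_ratio :: "nat \<Rightarrow> real \<Rightarrow> real" where
  "contraction_ratio n p =
     pnorm n p (\<lambda>i. \<Sum>j<n. Ematrix n i j * score n (hermite_roots n) j)
     / pnorm n p (score n (hermite_roots n))"

definition stam_deficit :: "nat \<Rightarrow> real \<Rightarrow> (nat \<Rightarrow> real) \<Rightarrow> (nat \<Rightarrow> real) \<Rightarrow> real" where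
  "stam_deficit n p \<alpha> \<beta> =
     Phi n p (Omega n \<alpha> \<beta>) powr (-1 / (p - 1)) - Phi n p \<alpha> powr (-1 / (p - 1))
       - Phi n p \<beta> powr (-1 / (p - 1))"

end

theory Submission
  imports Defs
begin

(* The Hermite polynomial is a fixed point of the finite free convolution up to dilation:
   He n \<boxplus>n He n = (sqrt 2)^n He n (x / sqrt 2), hence \<Omega>(h, h) = sqrt 2 h and, scores being
   homogeneous of degree -1, s(\<Omega>(h, h)) = s(h) / sqrt 2.  The Jacobian identity
   E s(h) = s(\<Omega>(h, h)) follows by implicit differentiation of the simple roots: moving \<alpha> j by t
   subtracts t f / (x - \<alpha> j) from f, convolution is linear and commutes with differentiation,
   and \<Sum>j s j f / (x - \<alpha> j) = f''/2, whose value at a root is s i f'.  Therefore every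
   p-norm contracts by exactly 2^(-1/2), \<Phi>p(\<Omega>(h, h)) = 2^(-p/2) \<Phi>p(h), and the Stam deficit
   equals \<Phi>p(h)^(-1/(p-1)) (2^(p/(2(p-1))) - 2), whose sign is that of 2 - p.
   Simplicity of the roots of He n comes from interlacing via the three-term recurrence. *)

section \<open>Polynomials with prescribed roots\<close>

lemma poly_poly_of_roots: "poly (poly_of_roots n a) x = (\<Prod>i<n. x - a i)"
  by (simp add: poly_of_roots_def poly_prod)

lemma poly_of_roots_Suc: "poly_of_roots (Suc n) a = poly_of_roots n a * [:- a n, 1:]"
  by (simp add: poly_of_roots_def)

lemma degree_poly_of_roots [simp]: "degree (poly_of_roots n a) = n"
  unfolding poly_of_roots_def by (simp add: degree_prod_eq_sum_degree)

lemma coeff_poly_of_roots_top [simp]: "coeff (poly_of_roots n a) n = 1"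
proof -
  have "lead_coeff (poly_of_roots n a) = 1"
    unfolding poly_of_roots_def lead_coeff_prod by simp
  then show ?thesis by simp
qed

lemma poly_of_roots_nonzero [simp]: "poly_of_roots n a \<noteq> 0"
  using coeff_poly_of_roots_top[of n a] by (metis coeff_0 zero_neq_one)

lemma poly_poly_of_roots_eq_0_iff: "poly (poly_of_roots n a) x = 0 \<longleftrightarrow> (\<exists>i<n. x = a i)"
  by (auto simp: poly_poly_of_roots prod_zero_iff)

lemma poly_of_roots_dvd:
  fixes P :: "real poly"
  assumes inj: "inj_on a {..<n}" and roots: "\<And>i. i < n \<Longrightarrow> poly P (a i) = 0"
  shows "k \<le> n \<Longrightarrow> poly_of_roots k a dvd P"
proof (induction k)
  case 0
  then show ?case by (simp add: poly_of_roots_def)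
next
  case (Suc k)
  then obtain q where q: "P = poly_of_roots k a * q" by (auto elim: dvdE)
  have "poly (poly_of_roots k a) (a k) \<noteq> 0"
  proof
    assume "poly (poly_of_roots k a) (a k) = 0"
    then obtain i where "i < k" "a k = a i" by (auto simp: poly_poly_of_roots_eq_0_iff)
    with inj_onD[OF inj, of k i] Suc.prems show False by simp
  qed
  then have "poly q (a k) = 0" using roots[of k] Suc.prems q by simp
  then obtain q' where "q = [:- a k, 1:] * q'" by (metis dvdE poly_eq_0_iff_dvd)
  then have "P = poly_of_roots (Suc k) a * q'" using q by (simp only: poly_of_roots_Suc mult.assoc)
  then show ?case by simp
qed

lemma monic_eq_poly_of_roots:
  fixes P :: "real poly"
  assumes "degree P = n" "lead_coeff P = 1"
    and "inj_on a {..<n}" "\<And>i. i < n \<Longrightarrow> poly P (a i) = 0"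
  shows "P = poly_of_roots n a"
proof -
  obtain q where q: "P = poly_of_roots n a * q"
    using poly_of_roots_dvd[OF assms(3,4) order.refl] by (auto elim: dvdE)
  with assms(2) have "q \<noteq> 0" by auto
  with q assms(1) have "degree q = 0" by (simp add: degree_mult_eq)
  moreover have "lead_coeff q = 1"
    using assms(2) unfolding q lead_coeff_mult by simp
  ultimately have "q = 1" by (metis degree_0_id pCons_one)
  with q show ?thesis by simp
qed

lemma sorted_roots_poly_of_roots:
  assumes mono: "strict_mono_on {..<n} a" and pad: "\<forall>i\<ge>n. a i = 0"
  shows "sorted_roots n (poly_of_roots n a) = a"
proof -
  define Q where "Q \<gamma> \<longleftrightarrow> (\<forall>i j. i \<le> j \<and> j < n \<longrightarrow> \<gamma> i \<le> (\<gamma> j::real))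
                        \<and> (\<forall>i. n \<le> i \<longrightarrow> \<gamma> i = 0) \<and> poly_of_roots n \<gamma> = poly_of_roots n a" for \<gamma>
  have "Q a"
    unfolding Q_def using mono pad by (auto simp: strict_mono_on_less_eq)
  then have Qb: "Q (sorted_roots n (poly_of_roots n a))"
    unfolding sorted_roots_def Q_def[symmetric] by (rule someI[where P = Q])
  define b where "b = sorted_roots n (poly_of_roots n a)"
  have "poly (poly_of_roots n b) x = 0 \<longleftrightarrow> poly (poly_of_roots n a) x = 0" for x
    using Qb unfolding Q_def b_def by simp
  then have image: "b ` {..<n} = a ` {..<n}"
    unfolding poly_poly_of_roots_eq_0_iff by blast
  have inj_a: "inj_on a {..<n}" using mono by (rule strict_mono_on_imp_inj_on)
  then have "card (b ` {..<n}) = card {..<n}" by (simp add: image card_image)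
  then have "distinct (map b [0..<n])" by (simp add: distinct_map atLeast0LessThan inj_on_iff_eq_card)
  moreover have "distinct (map a [0..<n])" using inj_a by (simp add: distinct_map atLeast0LessThan)
  moreover have "sorted (map b [0..<n])"
    using Qb unfolding Q_def b_def sorted_iff_nth_mono by auto
  moreover have "sorted (map a [0..<n])"
    using mono unfolding sorted_iff_nth_mono by (auto simp: strict_mono_on_less_eq)
  moreover have "set (map b [0..<n]) = set (map a [0..<n])" using image by (simp add: atLeast0LessThan)
  ultimately have "map b [0..<n] = map a [0..<n]" by (metis sorted_distinct_set_unique)
  then have "b i = a i" for i
  proof (cases "i < n")
    case True
    then show ?thesis using arg_cong[OF \<open>map b [0..<n] = map a [0..<n]\<close>, of "\<lambda>l. l ! i"] by simp
  next
    case False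
    then show ?thesis using Qb pad unfolding Q_def b_def by auto
  qed
  then show ?thesis unfolding b_def by auto
qed

lemma sorted_roots_eqI:
  fixes P :: "real poly"
  assumes "degree P = n" "lead_coeff P = 1"
    and mono: "strict_mono_on {..<n} a" and pad: "\<forall>i\<ge>n. a i = 0"
    and "\<And>i. i < n \<Longrightarrow> poly P (a i) = 0"
  shows "sorted_roots n P = a"
  using monic_eq_poly_of_roots[OF assms(1,2) strict_mono_on_imp_inj_on[OF mono] assms(5)]
    sorted_roots_poly_of_roots[OF mono pad] by simp

definition root_cofactor :: "nat \<Rightarrow> (nat \<Rightarrow> real) \<Rightarrow> nat \<Rightarrow> real poly" where
  "root_cofactor n \<alpha> j = (\<Prod>k\<in>{..<n}-{j}. [:- \<alpha> k, 1:])"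

lemma poly_of_roots_eq_mult_root_cofactor:
  "j < n \<Longrightarrow> poly_of_roots n \<alpha> = [:- \<alpha> j, 1:] * root_cofactor n \<alpha> j"
  unfolding poly_of_roots_def root_cofactor_def by (simp add: prod.remove)

lemma poly_root_cofactor: "poly (root_cofactor n \<alpha> j) x = (\<Prod>k\<in>{..<n}-{j}. x - \<alpha> k)"
  unfolding root_cofactor_def by (simp add: poly_prod)

lemma degree_root_cofactor: "j < n \<Longrightarrow> degree (root_cofactor n \<alpha> j) < n"
  unfolding root_cofactor_def by (simp add: degree_prod_eq_sum_degree)

section \<open>Perturbation of simple roots\<close>

lemma ex_uniform_gap:
  fixes \<gamma> :: "nat \<Rightarrow> real"
  assumes mono: "strict_mono_on {..<n} \<gamma>"
  shows "\<exists>\<delta>>0. \<forall>i j. i < j \<and> j < n \<longrightarrow> 2 * \<delta> < \<gamma> j - \<gamma> i"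
proof -
  define D where "D = (\<lambda>(i, j). \<gamma> j - \<gamma> i) ` {(i, j). i < j \<and> j < n}"
  have "finite D"
    unfolding D_def by (rule finite_imageI, rule finite_subset[of _ "{..<n} \<times> {..<n}"]) auto
  define m where "m = Min (insert 1 D)"
  have "m > 0"
    unfolding m_def using \<open>finite D\<close> mono by (subst Min_gr_iff) (auto simp: D_def strict_mono_on_def)
  moreover have "m \<le> \<gamma> j - \<gamma> i" if "i < j" "j < n" for i j
    unfolding m_def using \<open>finite D\<close> that by (intro Min_le) (auto simp: D_def)
  ultimately show ?thesis
    by (intro exI[of _ "m / 3"]) force
qed

lemma poly_of_roots_sign_change:
  fixes \<gamma> :: "nat \<Rightarrow> real"
  assumes i: "i < n" and e: "\<epsilon> > 0"
    and sep: "\<And>k. k < n \<Longrightarrow> k \<noteq> i \<Longrightarrow> \<epsilon> < \<bar>\<gamma> i - \<gamma> k\<bar>"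
  shows "poly (poly_of_roots n \<gamma>) (\<gamma> i - \<epsilon>) * poly (poly_of_roots n \<gamma>) (\<gamma> i + \<epsilon>) < 0"
proof -
  define C where "C = {..<n} - {i}"
  have split: "poly (poly_of_roots n \<gamma>) x = (x - \<gamma> i) * (\<Prod>k\<in>C. x - \<gamma> k)" for x
    unfolding poly_poly_of_roots C_def using i by (simp add: prod.remove)
  have "0 < (\<gamma> i - \<epsilon> - \<gamma> k) * (\<gamma> i + \<epsilon> - \<gamma> k)" if "k \<in> C" for k
  proof -
    have "\<epsilon>\<^sup>2 < \<bar>\<gamma> i - \<gamma> k\<bar>\<^sup>2"
      using sep[of k] that e unfolding C_def by (intro power_strict_mono) auto
    then show ?thesis by (simp add: power2_eq_square algebra_simps)
  qed
  then have "0 < (\<Prod>k\<in>C. \<gamma> i - \<epsilon> - \<gamma> k) * (\<Prod>k\<in>C. \<gamma> i + \<epsilon> - \<gamma> k)"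
    by (simp add: prod.distrib[symmetric] prod_pos)
  then show ?thesis
    unfolding split using e by (simp add: mult_pos_pos algebra_simps mult_less_0_iff)
qed

lemma monic_poly_of_roots_minus_smult:
  fixes G :: "real poly"
  assumes "degree G < n"
  shows "degree (poly_of_roots n \<gamma> - smult t G) = n"
    and "lead_coeff (poly_of_roots n \<gamma> - smult t G) = 1"
proof -
  have Gn: "coeff G n = 0" using assms by (simp add: coeff_eq_0)
  then have top: "coeff (poly_of_roots n \<gamma> - smult t G) n = 1" by simp
  have "degree (poly_of_roots n \<gamma> - smult t G) \<le> n"
    using assms by (intro degree_le) (auto simp: coeff_eq_0)
  moreover have "n \<le> degree (poly_of_roots n \<gamma> - smult t G)"
    by (rule le_degree) (simp add: Gn)
  ultimately show "degree (poly_of_roots n \<gamma> - smult t G) = n" by simp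
  with top show "lead_coeff (poly_of_roots n \<gamma> - smult t G) = 1" by simp
qed

text \<open>F 0 changes sign across each of the n disjoint intervals (\<gamma> i - \<epsilon>, \<gamma> i + \<epsilon>); so does F t
  for small t, and having degree n it then has exactly one root in each of them.\<close>
lemma eventually_sorted_roots_perturb:
  fixes \<gamma> :: "nat \<Rightarrow> real" and G :: "real poly" and n :: nat
  defines "F t \<equiv> poly_of_roots n \<gamma> - smult t G"
  assumes mono: "strict_mono_on {..<n} \<gamma>"
    and degG: "degree G < n"
    and gap: "\<forall>i j. i < j \<and> j < n \<longrightarrow> 2 * \<delta> < \<gamma> j - \<gamma> i"
    and e: "0 < \<epsilon>" "\<epsilon> \<le> \<delta>"
  shows "\<forall>\<^sub>F t in at 0. \<forall>i<n.
     poly (F t) (sorted_roots n (F t) i) = 0 \<and> \<bar>sorted_roots n (F t) i - \<gamma> i\<bar> < \<epsilon>"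
proof -
  have sep: "\<epsilon> < \<bar>\<gamma> i - \<gamma> k\<bar>" if "i < n" "k < n" "k \<noteq> i" for i k
    using gap e that by (cases "i < k") (force, force simp: not_less_iff_gr_or_eq)
  have "\<forall>\<^sub>F t in at 0. poly (F t) (\<gamma> i - \<epsilon>) * poly (F t) (\<gamma> i + \<epsilon>) < 0" if i: "i < n" for i
  proof -
    have "((\<lambda>t. poly (F t) (\<gamma> i - \<epsilon>) * poly (F t) (\<gamma> i + \<epsilon>))
          \<longlongrightarrow> poly (F 0) (\<gamma> i - \<epsilon>) * poly (F 0) (\<gamma> i + \<epsilon>)) (at 0)"
      unfolding F_def by (auto intro!: tendsto_eq_intros)
    moreover have "poly (F 0) (\<gamma> i - \<epsilon>) * poly (F 0) (\<gamma> i + \<epsilon>) < 0"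
      unfolding F_def using poly_of_roots_sign_change[where \<gamma> = \<gamma>, OF i e(1) sep[OF i]] by simp
    ultimately show ?thesis by (rule order_tendstoD)
  qed
  then have "\<forall>\<^sub>F t in at 0. \<forall>i\<in>{..<n}. poly (F t) (\<gamma> i - \<epsilon>) * poly (F t) (\<gamma> i + \<epsilon>) < 0"
    by (intro eventually_ball_finite) auto
  then show ?thesis
  proof (rule eventually_mono)
    fix t
    assume change: "\<forall>i\<in>{..<n}. poly (F t) (\<gamma> i - \<epsilon>) * poly (F t) (\<gamma> i + \<epsilon>) < 0"
    define r where "r i = (if i < n then SOME x. \<gamma> i - \<epsilon> < x \<and> x < \<gamma> i + \<epsilon> \<and> poly (F t) x = 0 else 0)" for i
    have r: "\<gamma> i - \<epsilon> < r i \<and> r i < \<gamma> i + \<epsilon> \<and> poly (F t) (r i) = 0" if "i < n" for i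
    proof -
      have "\<exists>x. \<gamma> i - \<epsilon> < x \<and> x < \<gamma> i + \<epsilon> \<and> poly (F t) x = 0"
        using poly_IVT[of "\<gamma> i - \<epsilon>" "\<gamma> i + \<epsilon>" "F t"] change that e by auto
      from someI_ex[OF this] show ?thesis unfolding r_def using that by simp
    qed
    have "strict_mono_on {..<n} r"
    proof (rule strict_mono_onI)
      fix i j :: nat assume "i \<in> {..<n}" "j \<in> {..<n}" "i < j"
      then show "r i < r j" using r[of i] r[of j] gap e by force
    qed
    moreover have "\<forall>i\<ge>n. r i = 0" unfolding r_def by simp
    ultimately have "sorted_roots n (F t) = r"
      using r unfolding F_def
      by (intro sorted_roots_eqI monic_poly_of_roots_minus_smult[OF degG]) auto
    then show "\<forall>i<n. poly (F t) (sorted_roots n (F t) i) = 0 \<and> \<bar>sorted_roots n (F t) i - \<gamma> i\<bar> < \<epsilon>"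
      using r by force
  qed
qed

lemma has_real_derivative_sorted_roots_perturb:
  fixes \<gamma> :: "nat \<Rightarrow> real" and G :: "real poly"
  assumes mono: "strict_mono_on {..<n} \<gamma>" and pad: "\<forall>i\<ge>n. \<gamma> i = 0"
    and degG: "degree G < n" and i: "i < n"
  shows "((\<lambda>t. sorted_roots n (poly_of_roots n \<gamma> - smult t G) i) has_real_derivative
          poly G (\<gamma> i) / (\<Prod>k\<in>{..<n}-{i}. \<gamma> i - \<gamma> k)) (at 0)"
proof -
  obtain \<delta> where "\<delta> > 0" and gap: "\<forall>i j. i < j \<and> j < n \<longrightarrow> 2 * \<delta> < \<gamma> j - \<gamma> i"
    using ex_uniform_gap[OF mono] by blast
  define F where "F t = poly_of_roots n \<gamma> - smult t G" for t
  define \<rho> where "\<rho> t = sorted_roots n (F t) i" for t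
  define R where "R = root_cofactor n \<gamma> i"
  have poly_R: "poly R x = (\<Prod>k\<in>{..<n}-{i}. x - \<gamma> k)" for x
    unfolding R_def by (rule poly_root_cofactor)
  have factor: "poly (F t) x = (x - \<gamma> i) * poly R x - t * poly G x" for t x
    unfolding F_def R_def poly_of_roots_eq_mult_root_cofactor[OF i] by (simp add: algebra_simps)
  have "\<rho> 0 = \<gamma> i"
    unfolding \<rho>_def F_def using sorted_roots_poly_of_roots[OF mono pad] by simp
  have "poly R (\<gamma> i) \<noteq> 0"
    using strict_mono_on_eq[OF mono] i by (auto simp: poly_R)
  have "(\<rho> \<longlongrightarrow> \<gamma> i) (at 0)"
  proof (rule tendstoI)
    fix e :: real assume "e > 0"
    then have "0 < min e \<delta>" "min e \<delta> \<le> \<delta>" using \<open>\<delta> > 0\<close> by auto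
    from eventually_sorted_roots_perturb[OF mono degG gap this]
    show "\<forall>\<^sub>F t in at 0. dist (\<rho> t) (\<gamma> i) < e"
      by (rule eventually_mono) (use i in \<open>auto simp: dist_real_def \<rho>_def F_def\<close>)
  qed
  have R_lim: "((\<lambda>t. poly R (\<rho> t)) \<longlongrightarrow> poly R (\<gamma> i)) (at 0)"
    using \<open>(\<rho> \<longlongrightarrow> \<gamma> i) (at 0)\<close> by (intro tendsto_intros)
  text \<open>Implicit differentiation: at a root \<rho> t of F t one has (\<rho> t - \<gamma> i) R(\<rho> t) = t G(\<rho> t).\<close>
  have "\<forall>\<^sub>F t in at 0. poly (F t) (\<rho> t) = 0"
    using eventually_sorted_roots_perturb[OF mono degG gap \<open>\<delta> > 0\<close> order.refl]
    unfolding F_def \<rho>_def by (rule eventually_mono) (use i in auto)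
  moreover have "\<forall>\<^sub>F t in at 0. poly R (\<rho> t) \<noteq> 0"
    using R_lim \<open>poly R (\<gamma> i) \<noteq> 0\<close> by (rule tendsto_imp_eventually_ne)
  ultimately have "\<forall>\<^sub>F t in at 0. poly G (\<rho> t) / poly R (\<rho> t) = (\<rho> t - \<rho> 0) / (t - 0)"
    using eventually_neq_at_within[of 0 0 UNIV]
    by eventually_elim (simp add: factor \<open>\<rho> 0 = \<gamma> i\<close> field_simps)
  moreover have "((\<lambda>t. poly G (\<rho> t) / poly R (\<rho> t)) \<longlongrightarrow> poly G (\<gamma> i) / poly R (\<gamma> i)) (at 0)"
    using \<open>(\<rho> \<longlongrightarrow> \<gamma> i) (at 0)\<close> \<open>poly R (\<gamma> i) \<noteq> 0\<close> by (intro tendsto_intros)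
  ultimately have "(\<rho> has_real_derivative poly G (\<gamma> i) / poly R (\<gamma> i)) (at 0)"
    unfolding has_field_derivative_iff by (rule Lim_transform_eventually[rotated])
  then show ?thesis unfolding \<rho>_def F_def poly_R .
qed

section \<open>Finite free convolution\<close>

text \<open>ecoeff n f k and ffconv_ecoeff n f g k are the a k and c k of the definition of ffconv.\<close>
definition ecoeff :: "nat \<Rightarrow> real poly \<Rightarrow> nat \<Rightarrow> real" where
  "ecoeff n f k = (-1) ^ k * coeff f (n - k)"

definition ffconv_weight :: "nat \<Rightarrow> nat \<Rightarrow> nat \<Rightarrow> real" where
  "ffconv_weight n i k = (fact (n - i) * fact (n - (k - i))) / (fact n * fact (n - k))"

definition ffconv_ecoeff :: "nat \<Rightarrow> real poly \<Rightarrow> real poly \<Rightarrow> nat \<Rightarrow> real" where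
  "ffconv_ecoeff n f g k = (\<Sum>i\<le>k. ffconv_weight n i k * ecoeff n f i * ecoeff n g (k - i))"

lemma coeff_sum_monom_rev:
  "coeff (\<Sum>k\<le>n. monom (d k) (n - k)) m = (if m \<le> n then d (n - m) else 0)"
proof -
  have "coeff (\<Sum>k\<le>n. monom (d k) (n - k)) m = (\<Sum>k\<le>n. if k = n - m \<and> m \<le> n then d k else 0)"
    unfolding coeff_sum coeff_monom by (rule sum.cong) auto
  then show ?thesis by (simp add: sum.delta)
qed

lemma coeff_ffconv:
  "coeff (ffconv n f g) m = (if m \<le> n then (-1) ^ (n - m) * ffconv_ecoeff n f g (n - m) else 0)"
proof -
  have "ffconv n f g = (\<Sum>k\<le>n. monom ((-1) ^ k * ffconv_ecoeff n f g k) (n - k))"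
    by (simp add: ffconv_def ecoeff_def ffconv_ecoeff_def ffconv_weight_def Let_def)
  then show ?thesis by (simp add: coeff_sum_monom_rev)
qed

lemma ffconv_sum:
  "ffconv n (\<Sum>j\<in>A. smult (s j) (q j)) g = (\<Sum>j\<in>A. smult (s j) (ffconv n (q j) g))"
proof (cases "finite A")
  case True
  have "ffconv_ecoeff n (\<Sum>j\<in>A. smult (s j) (q j)) g k = (\<Sum>j\<in>A. s j * ffconv_ecoeff n (q j) g k)" for k
    unfolding ffconv_ecoeff_def ecoeff_def
    by (simp add: coeff_sum sum_distrib_left sum_distrib_right mult_ac sum.swap[of _ A])
  then show ?thesis
    by (intro poly_eqI) (simp add: coeff_sum coeff_ffconv sum_distrib_left mult.left_commute)
next
  case False
  then show ?thesis by (intro poly_eqI) (simp add: coeff_ffconv ffconv_ecoeff_def ecoeff_def)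
qed

lemma ffconv_smult: "ffconv n (smult c f) g = smult c (ffconv n f g)"
  using ffconv_sum[of n "\<lambda>_. c" "\<lambda>_. f" "{()}" g] by simp

lemma ffconv_diff: "ffconv n (f - f') g = ffconv n f g - ffconv n f' g"
proof (rule poly_eqI)
  fix m
  have c: "ffconv_ecoeff n (f - f') g k = ffconv_ecoeff n f g k - ffconv_ecoeff n f' g k" for k
    unfolding ffconv_ecoeff_def ecoeff_def by (simp add: algebra_simps sum_subtractf)
  show "coeff (ffconv n (f - f') g) m = coeff (ffconv n f g - ffconv n f' g) m"
    unfolding coeff_diff coeff_ffconv c by (simp add: right_diff_distrib)
qed

lemma ffconv_ecoeff_pderiv_Suc:
  assumes m: "m < n" and "degree f \<le> n"
  shows "ffconv_ecoeff n (pderiv f) g (Suc m) = - real (n - m) * ffconv_ecoeff n f g m"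
proof -
  have fact_step: "(fact (n - j) :: real) = real (n - j) * fact (n - Suc j)" if "j < n" for j
  proof -
    from that have "n - j = Suc (n - Suc j)" by simp
    then show ?thesis by (simp only: fact_Suc)
  qed
  have summand: "ffconv_weight n (Suc i) (Suc m) * ecoeff n (pderiv f) (Suc i) * ecoeff n g (m - i)
        = - real (n - m) * (ffconv_weight n i m * ecoeff n f i * ecoeff n g (m - i))"
    if i: "i \<le> m" for i
  proof -
    have "i < n" using i m by simp
    then have "ecoeff n (pderiv f) (Suc i) = - real (n - i) * ecoeff n f i"
      unfolding ecoeff_def coeff_pderiv by (simp add: Suc_diff_Suc of_nat_diff algebra_simps)
    moreover have "ffconv_weight n (Suc i) (Suc m) * real (n - i) = real (n - m) * ffconv_weight n i m"
      unfolding ffconv_weight_def fact_step[OF \<open>i < n\<close>] fact_step[OF m] using m by simp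
    ultimately show ?thesis by (simp add: algebra_simps)
  qed
  have "ecoeff n (pderiv f) 0 = 0"
    unfolding ecoeff_def coeff_pderiv using assms(2) by (simp add: coeff_eq_0)
  then have "ffconv_ecoeff n (pderiv f) g (Suc m)
      = (\<Sum>i\<le>m. ffconv_weight n (Suc i) (Suc m) * ecoeff n (pderiv f) (Suc i) * ecoeff n g (m - i))"
    unfolding ffconv_ecoeff_def by (subst sum.atMost_Suc_shift) simp
  also have "\<dots> = - real (n - m) * ffconv_ecoeff n f g m"
    unfolding ffconv_ecoeff_def sum_distrib_left by (rule sum.cong) (simp_all add: summand)
  finally show ?thesis .
qed

lemma ffconv_pderiv:
  assumes "degree f \<le> n"
  shows "ffconv n (pderiv f) g = pderiv (ffconv n f g)"
proof (rule poly_eqI)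
  fix m
  show "coeff (ffconv n (pderiv f) g) m = coeff (pderiv (ffconv n f g)) m"
  proof (cases "m < n")
    case True
    then have "n - m = Suc (n - Suc m)" "n - Suc m < n" by simp_all
    with ffconv_ecoeff_pderiv_Suc[OF \<open>n - Suc m < n\<close> assms, of g] True
    show ?thesis by (simp add: coeff_ffconv coeff_pderiv of_nat_diff) (simp add: algebra_simps)
  next
    case False
    have "ecoeff n (pderiv f) 0 = 0"
      unfolding ecoeff_def coeff_pderiv using assms by (simp add: coeff_eq_0)
    with False show ?thesis
      by (auto simp: coeff_ffconv coeff_pderiv ffconv_ecoeff_def)
  qed
qed

lemma degree_ffconv_less:
  assumes "degree q < n"
  shows "degree (ffconv n q g) < n"
proof -
  have "ecoeff n q 0 = 0" unfolding ecoeff_def using assms by (simp add: coeff_eq_0)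
  then have "coeff (ffconv n q g) m = 0" if "n - 1 < m" for m
    using that by (cases "m = n") (auto simp: coeff_ffconv ffconv_ecoeff_def)
  then have "degree (ffconv n q g) \<le> n - 1" by (intro degree_le) auto
  then show ?thesis using assms by linarith
qed

lemma coeff_ffconv_rescale:
  assumes "\<And>k. coeff f k = c ^ (n - k) * coeff f0 k" and "\<And>k. coeff g k = c ^ (n - k) * coeff g0 k"
  shows "coeff (ffconv n f g) m = c ^ (n - m) * coeff (ffconv n f0 g0) m"
proof -
  have a: "ecoeff n f i = c ^ i * ecoeff n f0 i" "ecoeff n g i = c ^ i * ecoeff n g0 i" if "i \<le> n" for i
    unfolding ecoeff_def using assms that by auto
  have "ffconv_ecoeff n f g k = c ^ k * ffconv_ecoeff n f0 g0 k" if "k \<le> n" for k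
  proof -
    have "c ^ i * c ^ (k - i) = c ^ k" if "i \<le> k" for i
      using that by (simp add: power_add[symmetric])
    then show ?thesis
      unfolding ffconv_ecoeff_def sum_distrib_left using a \<open>k \<le> n\<close>
      by (intro sum.cong) (auto simp: algebra_simps)
  qed
  then show ?thesis by (simp add: coeff_ffconv algebra_simps)
qed

section \<open>Scores and the Jacobian of the root map\<close>

lemma pderiv_linear_factor: "pderiv [:- a, 1:] = 1"
  by (simp add: pderiv_pCons)

lemma poly_of_roots_fun_upd_add:
  assumes j: "j < n"
  shows "poly_of_roots n (\<alpha>(j := \<alpha> j + t)) = poly_of_roots n \<alpha> - smult t (root_cofactor n \<alpha> j)"
proof -
  have "root_cofactor n (\<alpha>(j := \<alpha> j + t)) j = root_cofactor n \<alpha> j"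
    unfolding root_cofactor_def by (rule prod.cong) auto
  then have "poly_of_roots n (\<alpha>(j := \<alpha> j + t)) = [:- (\<alpha> j + t), 1:] * root_cofactor n \<alpha> j"
    using poly_of_roots_eq_mult_root_cofactor[OF j, of "\<alpha>(j := \<alpha> j + t)"] by simp
  also have "[:- (\<alpha> j + t), 1:] = [:- \<alpha> j, 1:] - [:t:]" by simp
  finally show ?thesis
    unfolding left_diff_distrib poly_of_roots_eq_mult_root_cofactor[OF j] by simp
qed

lemma pderiv_poly_of_roots: "pderiv (poly_of_roots n \<alpha>) = (\<Sum>j<n. root_cofactor n \<alpha> j)"
  unfolding poly_of_roots_def root_cofactor_def pderiv_prod by (simp add: pderiv_pCons)

lemma pderiv_root_cofactor:
  "pderiv (root_cofactor n \<alpha> j) = (\<Sum>k\<in>{..<n}-{j}. \<Prod>l\<in>{..<n}-{j}-{k}. [:- \<alpha> l, 1:])"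
  unfolding root_cofactor_def pderiv_prod by (simp add: pderiv_pCons)

lemma poly_pderiv2_poly_of_roots:
  assumes inj: "inj_on \<alpha> {..<n}" and i: "i < n"
  shows "poly (pderiv (pderiv (poly_of_roots n \<alpha>))) (\<alpha> i)
    = 2 * score n \<alpha> i * (\<Prod>k\<in>{..<n}-{i}. \<alpha> i - \<alpha> k)"
proof -
  define C where "C = {..<n} - {i}"
  define R where "R = root_cofactor n \<alpha> i"
  have ne: "\<alpha> i - \<alpha> k \<noteq> 0" if "k \<in> C" for k
    using that inj_onD[OF inj, of i k] i unfolding C_def by auto
  have "pderiv (pderiv (poly_of_roots n \<alpha>)) = [:- \<alpha> i, 1:] * pderiv (pderiv R) + pderiv R + pderiv R"
    unfolding poly_of_roots_eq_mult_root_cofactor[OF i] R_def[symmetric]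
    by (simp only: pderiv_mult pderiv_add pderiv_linear_factor mult_1_right)
  then have "poly (pderiv (pderiv (poly_of_roots n \<alpha>))) (\<alpha> i) = 2 * poly (pderiv R) (\<alpha> i)"
    by simp
  also have "poly (pderiv R) (\<alpha> i) = (\<Sum>j\<in>C. \<Prod>k\<in>C - {j}. \<alpha> i - \<alpha> k)"
    unfolding R_def pderiv_root_cofactor C_def by (simp add: poly_sum poly_prod)
  also have "\<dots> = (\<Sum>j\<in>C. (\<Prod>k\<in>C. \<alpha> i - \<alpha> k) / (\<alpha> i - \<alpha> j))"
  proof (rule sum.cong[OF refl])
    fix j assume "j \<in> C"
    then have "(\<Prod>k\<in>C. \<alpha> i - \<alpha> k) = (\<alpha> i - \<alpha> j) * (\<Prod>k\<in>C - {j}. \<alpha> i - \<alpha> k)"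
      by (simp add: C_def prod.remove)
    with ne[OF \<open>j \<in> C\<close>] show "(\<Prod>k\<in>C - {j}. \<alpha> i - \<alpha> k) = (\<Prod>k\<in>C. \<alpha> i - \<alpha> k) / (\<alpha> i - \<alpha> j)"
      by simp
  qed
  also have "\<dots> = score n \<alpha> i * (\<Prod>k\<in>C. \<alpha> i - \<alpha> k)"
    unfolding score_def C_def[symmetric] by (simp add: sum_distrib_right)
  finally show ?thesis unfolding C_def by simp
qed

lemma root_cofactor_partial_fraction:
  assumes "j < n" "k < n" "\<alpha> j \<noteq> \<alpha> k"
  shows "(\<Prod>l\<in>{..<n}-{j}-{k}. [:- \<alpha> l, 1:])
    = smult (1 / (\<alpha> j - \<alpha> k)) (root_cofactor n \<alpha> j - root_cofactor n \<alpha> k)"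
proof -
  define Q where "Q = (\<Prod>l\<in>{..<n}-{j}-{k}. [:- \<alpha> l, 1:])"
  have "root_cofactor n \<alpha> j = [:- \<alpha> k, 1:] * Q"
    unfolding root_cofactor_def Q_def by (rule prod.remove) (use assms in auto)
  moreover have "{..<n} - {j} - {k} = {..<n} - {k} - {j}" by auto
  then have "root_cofactor n \<alpha> k = [:- \<alpha> j, 1:] * Q"
    unfolding root_cofactor_def Q_def by (simp only:) (rule prod.remove, use assms in auto)
  ultimately have "root_cofactor n \<alpha> j - root_cofactor n \<alpha> k = ([:- \<alpha> k, 1:] - [:- \<alpha> j, 1:]) * Q"
    by (simp only: left_diff_distrib)
  also have "\<dots> = smult (\<alpha> j - \<alpha> k) Q" by simp
  finally show ?thesis using assms(3) by (simp add: Q_def)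
qed

text \<open>f'' is the sum over j \<noteq> k of f / ((x - \<alpha> j) (x - \<alpha> k)); split each term into partial
  fractions.\<close>
lemma sum_score_smult_root_cofactor:
  assumes inj: "inj_on \<alpha> {..<n}"
  shows "(\<Sum>j<n. smult (score n \<alpha> j) (root_cofactor n \<alpha> j))
    = smult (1/2) (pderiv (pderiv (poly_of_roots n \<alpha>)))"
proof -
  define S where "S j = {k \<in> {..<n}. k \<noteq> j}" for j
  have Sd: "{..<n} - {j} = S j" for j unfolding S_def by auto
  define q where "q = root_cofactor n \<alpha>"
  define A where "A = (\<Sum>j<n. \<Sum>k\<in>S j. smult (1 / (\<alpha> j - \<alpha> k)) (q j))"
  have "pderiv (pderiv (poly_of_roots n \<alpha>)) = (\<Sum>j<n. pderiv (q j))"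
    unfolding pderiv_poly_of_roots q_def using higher_pderiv_sum[of 1 "root_cofactor n \<alpha>" "{..<n}"] by simp
  also have "\<dots> = (\<Sum>j<n. \<Sum>k\<in>{..<n}-{j}. smult (1 / (\<alpha> j - \<alpha> k)) (q j - q k))"
    unfolding q_def pderiv_root_cofactor
    using inj by (intro sum.cong refl root_cofactor_partial_fraction) (auto simp: inj_on_def)
  also have "\<dots> = A - (\<Sum>j<n. \<Sum>k\<in>S j. smult (1 / (\<alpha> j - \<alpha> k)) (q k))"
    unfolding A_def Sd by (simp add: smult_diff_right sum_subtractf)
  also have "(\<Sum>j<n. \<Sum>k\<in>S j. smult (1 / (\<alpha> j - \<alpha> k)) (q k))
           = (\<Sum>k<n. \<Sum>j\<in>S k. smult (1 / (\<alpha> j - \<alpha> k)) (q k))"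
    unfolding S_def by (subst sum.swap_restrict) (auto intro!: sum.cong)
  also have "\<dots> = - A"
  proof -
    have flip: "smult (1 / (\<alpha> j - \<alpha> k)) p = - smult (1 / (\<alpha> k - \<alpha> j)) p" for j k p
      by (metis minus_diff_eq minus_divide_right smult_minus_left)
    show ?thesis unfolding A_def sum_negf[symmetric] by (intro sum.cong refl) (rule flip)
  qed
  finally have "smult (1/2) (pderiv (pderiv (poly_of_roots n \<alpha>))) = smult (1/2 + 1/2) A"
    by (simp only: diff_minus_eq_add smult_add_right smult_add_left)
  also have "A = (\<Sum>j<n. smult (score n \<alpha> j) (q j))"
    unfolding A_def score_def Sd smult_sum ..
  finally show ?thesis unfolding q_def by simp
qed

text \<open>Moving \<alpha> j by t subtracts t times the j-th cofactor from f; weighting these first-order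
  changes by the scores of \<alpha> gives f''/2, and ffconv commutes with derivatives.\<close>
lemma Omega_jacobian_score:
  assumes inj: "inj_on \<alpha> {..<n}"
    and mono: "strict_mono_on {..<n} \<gamma>" and pad: "\<forall>i\<ge>n. \<gamma> i = 0"
    and conv: "ffconv n (poly_of_roots n \<alpha>) (poly_of_roots n \<beta>) = poly_of_roots n \<gamma>"
    and i: "i < n"
  shows "(\<Sum>j<n. deriv (\<lambda>t. Omega n (\<alpha>(j := \<alpha> j + t)) \<beta> i) 0 * score n \<alpha> j) = score n \<gamma> i"
proof -
  define g where "g = poly_of_roots n \<beta>"
  define G where "G j = ffconv n (root_cofactor n \<alpha> j) g" for j
  define P where "P = (\<Prod>k\<in>{..<n}-{i}. \<gamma> i - \<gamma> k)"
  have "P \<noteq> 0"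
    unfolding P_def using strict_mono_on_eq[OF mono] i by auto
  have deriv_j: "deriv (\<lambda>t. Omega n (\<alpha>(j := \<alpha> j + t)) \<beta> i) 0 = poly (G j) (\<gamma> i) / P"
    if j: "j < n" for j
  proof -
    have "Omega n (\<alpha>(j := \<alpha> j + t)) \<beta> = sorted_roots n (poly_of_roots n \<gamma> - smult t (G j))" for t
      unfolding Omega_def poly_of_roots_fun_upd_add[OF j] ffconv_diff ffconv_smult G_def g_def conv ..
    moreover have "degree (G j) < n"
      unfolding G_def by (intro degree_ffconv_less degree_root_cofactor j)
    ultimately show ?thesis
      unfolding P_def using has_real_derivative_sorted_roots_perturb[OF mono pad _ i]
      by (simp add: DERIV_imp_deriv)
  qed
  have "(\<Sum>j<n. deriv (\<lambda>t. Omega n (\<alpha>(j := \<alpha> j + t)) \<beta> i) 0 * score n \<alpha> j)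
      = poly (\<Sum>j<n. smult (score n \<alpha> j) (G j)) (\<gamma> i) / P"
    by (simp add: deriv_j poly_sum sum_divide_distrib mult.commute)
  also have "(\<Sum>j<n. smult (score n \<alpha> j) (G j)) = smult (1/2) (pderiv (pderiv (poly_of_roots n \<gamma>)))"
  proof -
    have "degree (poly_of_roots n \<alpha>) \<le> n" "degree (pderiv (poly_of_roots n \<alpha>)) \<le> n"
      using degree_pderiv[of "poly_of_roots n \<alpha>"] by simp_all
    then show ?thesis
      unfolding G_def ffconv_sum[symmetric] sum_score_smult_root_cofactor[OF inj] ffconv_smult g_def
      by (simp add: ffconv_pderiv conv)
  qed
  also have "poly (smult (1/2) (pderiv (pderiv (poly_of_roots n \<gamma>)))) (\<gamma> i) / P = score n \<gamma> i"
    using poly_pderiv2_poly_of_roots[OF strict_mono_on_imp_inj_on[OF mono] i] \<open>P \<noteq> 0\<close>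
    by (simp add: P_def)
  finally show ?thesis .
qed

section \<open>Hermite polynomials\<close>

lemma coeff_hermite_Suc_Suc:
  "coeff (hermite (Suc (Suc n))) k
    = (case k of 0 \<Rightarrow> 0 | Suc k' \<Rightarrow> coeff (hermite (Suc n)) k') - real (Suc n) * coeff (hermite n) k"
  by (simp add: coeff_pCons split: nat.split)

lemma coeff_hermite_eq_0: "odd (n - k) \<or> n < k \<Longrightarrow> coeff (hermite n) k = 0"
proof (induction n arbitrary: k rule: hermite.induct)
  case 1
  then show ?case by (cases k) auto
next
  case 2
  then show ?case by (cases k) (auto simp: coeff_pCons split: nat.split)
next
  case (3 n)
  show ?case
  proof (cases k)
    case 0
    with "3.prems" "3.IH"(2)[of 0] show ?thesis by (simp add: coeff_hermite_Suc_Suc)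
  next
    case (Suc k')
    with "3.prems" "3.IH"(1)[of k'] "3.IH"(2)[of k] show ?thesis
      by (auto simp: coeff_hermite_Suc_Suc simp del: hermite.simps)
  qed
qed

lemma coeff_hermite_top [simp]: "coeff (hermite n) n = 1"
proof (induction n rule: hermite.induct)
  case (3 n)
  then show ?case by (simp add: coeff_hermite_Suc_Suc coeff_hermite_eq_0 del: hermite.simps)
qed simp_all

lemma degree_hermite [simp]: "degree (hermite n) = n"
  by (intro antisym degree_le le_degree) (auto simp: coeff_hermite_eq_0)

lemma lead_coeff_hermite: "lead_coeff (hermite n) = 1"
  by simp

lemma coeff_hermite_mult:
  "k + 2 * m = n \<Longrightarrow> coeff (hermite n) k * (fact m * 2 ^ m * fact k) = (-1) ^ m * fact n"
proof (induction n arbitrary: k m rule: hermite.induct)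
  case 1
  then show ?case by simp
next
  case 2
  then have "k = 1" "m = 0" by presburger+
  then show ?case by simp
next
  case (3 n)
  define D where "D = (fact m * 2 ^ m * fact k :: real)"
  have first: "(case k of 0 \<Rightarrow> 0 | Suc k' \<Rightarrow> coeff (hermite (Suc n)) k') * D = real k * ((-1) ^ m * fact (Suc n))"
  proof (cases k)
    case (Suc k')
    then have "D = real k * (fact m * 2 ^ m * fact k')" unfolding D_def by simp
    with Suc "3.IH"(1)[of k' m] "3.prems" show ?thesis by (simp add: mult_ac)
  qed simp
  have second: "coeff (hermite n) k * D = - (2 * real m) * ((-1) ^ m * fact n)"
  proof (cases m)
    case 0
    with "3.prems" have "coeff (hermite n) k = 0" by (intro coeff_hermite_eq_0) simp
    with 0 show ?thesis by simp
  next
    case (Suc m')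
    then have "D = 2 * real m * (fact m' * 2 ^ m' * fact k)" unfolding D_def by simp
    then have "coeff (hermite n) k * D = 2 * real m * (coeff (hermite n) k * (fact m' * 2 ^ m' * fact k))"
      by (simp only: mult_ac)
    also have "\<dots> = 2 * real m * ((-1) ^ m' * fact n)"
      using Suc "3.IH"(2)[of k m'] "3.prems" by simp
    finally show ?thesis using Suc by (simp add: algebra_simps)
  qed
  have "coeff (hermite (Suc (Suc n))) k * D
      = (case k of 0 \<Rightarrow> 0 | Suc k' \<Rightarrow> coeff (hermite (Suc n)) k') * D - real (Suc n) * (coeff (hermite n) k * D)"
    unfolding coeff_hermite_Suc_Suc by (simp only: left_diff_distrib mult.assoc)
  also have "\<dots> = real k * ((-1) ^ m * fact (Suc n)) + real (Suc n) * (2 * real m) * ((-1) ^ m * fact n)"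
    unfolding first second by simp
  also have "\<dots> = (-1) ^ m * fact (Suc n) * (real k + 2 * real m)"
    by (simp add: algebra_simps)
  also have "\<dots> = (-1) ^ m * fact (Suc (Suc n))"
    using "3.prems" by (simp flip: of_nat_add of_nat_mult)
  finally show ?case unfolding D_def .
qed

lemma coeff_hermite:
  "k + 2 * m = n \<Longrightarrow> coeff (hermite n) k = (-1) ^ m * fact n / (fact m * 2 ^ m * fact k)"
  using coeff_hermite_mult[of k m n] by (simp add: field_simps)

lemma poly_hermite_minus: "poly (hermite n) (- x) = (-1) ^ n * poly (hermite n) x"
  by (induction n rule: hermite.induct) (auto simp: algebra_simps)

lemma sign_prod_diff:
  fixes y :: "nat \<Rightarrow> real"
  assumes "\<And>l. l < m \<Longrightarrow> l < k \<Longrightarrow> y l < x" and "\<And>l. l < m \<Longrightarrow> k \<le> l \<Longrightarrow> x < y l"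
  shows "(-1) ^ (m - k) * (\<Prod>l<m. x - y l) > 0"
  using assms
proof (induction m)
  case 0
  then show ?case by simp
next
  case (Suc m)
  then have IH: "(-1) ^ (m - k) * (\<Prod>l<m. x - y l) > 0" by simp
  show ?case
  proof (cases "m < k")
    case True
    with Suc.prems have "x - y m > 0" "Suc m - k = m - k" by auto
    with IH show ?thesis by (simp add: mult.assoc[symmetric])
  next
    case False
    with Suc.prems have "x - y m < 0" "Suc m - k = Suc (m - k)" by auto
    with IH show ?thesis by (simp add: mult_neg_neg mult.assoc[symmetric] mult_less_0_iff)
  qed
qed

lemma alternating_signs_imp_poly_of_roots:
  fixes H :: "real poly"
  assumes "degree H = N" "lead_coeff H = 1"
    and p: "strict_mono p"
    and sign: "\<And>k. k \<le> N \<Longrightarrow> (-1) ^ (N - k) * poly H (p k) > 0"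
  obtains z where "strict_mono_on {..<N} z" "H = poly_of_roots N z"
    "\<And>k. k < N \<Longrightarrow> p k < z k \<and> z k < p (Suc k)"
proof -
  have "\<exists>x. p k < x \<and> x < p (Suc k) \<and> poly H x = 0" if k: "k < N" for k
  proof -
    have "N - k = Suc (N - Suc k)" using k by simp
    then have "(-1) ^ (N - Suc k) * poly H (p k) < 0" "(-1) ^ (N - Suc k) * poly H (p (Suc k)) > 0"
      using sign[of k] sign[of "Suc k"] k by simp_all
    then have "poly H (p k) * poly H (p (Suc k)) < 0"
      by (cases "even (N - Suc k)") (auto simp: mult_less_0_iff)
    with poly_IVT[OF strict_monoD[OF p lessI]] show ?thesis by blast
  qed
  then obtain z where z: "\<And>k. k < N \<Longrightarrow> p k < z k \<and> z k < p (Suc k) \<and> poly H (z k) = 0"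
    by metis
  have "strict_mono_on {..<N} z"
  proof (rule strict_mono_onI)
    fix i j assume "i \<in> {..<N}" "j \<in> {..<N}" "i < j"
    then have "z i < p (Suc i)" "p (Suc i) \<le> p j" "p j < z j"
      using z strict_mono_less_eq[OF p] by auto
    then show "z i < z j" by linarith
  qed
  moreover have "H = poly_of_roots N z"
    using assms(1,2) strict_mono_on_imp_inj_on[OF \<open>strict_mono_on {..<N} z\<close>] z
    by (intro monic_eq_poly_of_roots) auto
  ultimately show ?thesis using z that by blast
qed

text \<open>At the roots of He (n + 1) the recurrence gives He (n + 2) = -(n + 1) He n, so the
  alternation of He n there passes to He (n + 2); the outer points come from the degree.\<close>
lemma hermite_sign_alternation:
  assumes y_mono: "strict_mono_on {..<Suc n} y"
    and y_roots: "hermite (Suc n) = poly_of_roots (Suc n) y"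
    and y_sign: "\<forall>k\<le>n. (-1) ^ (n - k) * poly (hermite n) (y k) > 0"
  obtains p where "strict_mono p" "\<And>k. k \<le> n \<Longrightarrow> p (Suc k) = y k"
    "\<And>k. k \<le> Suc (Suc n) \<Longrightarrow> (-1) ^ (Suc (Suc n) - k) * poly (hermite (Suc (Suc n))) (p k) > 0"
proof -
  define H where "H = hermite (Suc (Suc n))"
  have H_at_y: "poly H (y k) = - real (Suc n) * poly (hermite n) (y k)" if "k \<le> n" for k
  proof -
    have "poly (hermite (Suc n)) (y k) = 0"
      unfolding y_roots poly_poly_of_roots_eq_0_iff using that le_imp_less_Suc by blast
    then show ?thesis unfolding H_def by (simp add: algebra_simps)
  qed
  have "lead_coeff H = 1" unfolding H_def by (rule lead_coeff_hermite)
  then obtain b where "\<forall>x\<ge>b. lead_coeff H \<le> poly H x"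
    using poly_pinfty_gt_lc[of H] by auto
  with \<open>lead_coeff H = 1\<close> have b: "\<And>x. x \<ge> b \<Longrightarrow> poly H x > 0" by force
  define B where "B = max b (max (y n + 1) (1 - y 0))"
  have B: "B \<ge> b" "B > y n" "- B < y 0" unfolding B_def by auto
  define p where "p k = (if k = 0 then - B else if k \<le> Suc n then y (k - 1) else B + real k)" for k
  have "strict_mono p"
  proof (rule strict_monoI_Suc)
    fix k
    consider "k = 0" | "1 \<le> k \<and> k \<le> n" | "k = Suc n" | "k > Suc n" by linarith
    then show "p k < p (Suc k)"
      by cases (use B y_mono in \<open>auto simp: p_def strict_mono_on_def\<close>)
  qed
  moreover have "(-1) ^ (Suc (Suc n) - k) * poly H (p k) > 0" if "k \<le> Suc (Suc n)" for k
  proof -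
    consider "k = 0" | k' where "k = Suc k'" "k' \<le> n" | "k = Suc (Suc n)"
      using \<open>k \<le> Suc (Suc n)\<close> by (cases k) (auto simp: le_Suc_eq)
    then show ?thesis
    proof cases
      case 1
      have "poly H (p k) = (-1) ^ Suc (Suc n) * poly H B"
        unfolding 1 p_def H_def using poly_hermite_minus[of "Suc (Suc n)" B] by simp
      with b[OF B(1)] show ?thesis
        unfolding 1 by (simp add: mult.assoc[symmetric] power_add[symmetric])
    next
      case 2
      then have "(-1) ^ (Suc (Suc n) - k) * poly H (p k)
          = real (Suc n) * ((-1) ^ (n - k') * poly (hermite n) (y k'))"
        by (simp add: p_def H_at_y Suc_diff_le) (simp add: algebra_simps)
      with y_sign 2 show ?thesis by simp
    next
      case 3
      with b B show ?thesis unfolding p_def by simp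
    qed
  qed
  ultimately show ?thesis using that unfolding H_def by (simp add: p_def)
qed

lemma hermite_interlacing:
  "\<exists>y. strict_mono_on {..<Suc n} y \<and> hermite (Suc n) = poly_of_roots (Suc n) y
       \<and> (\<forall>k\<le>n. (-1) ^ (n - k) * poly (hermite n) (y k) > 0)"
proof (induction n)
  case 0
  have "hermite (Suc 0) = poly_of_roots (Suc 0) (\<lambda>_. 0)" by (simp add: poly_of_roots_def)
  then show ?case by (intro exI[of _ "\<lambda>_. 0"]) (auto simp: strict_mono_on_def)
next
  case (Suc n)
  then obtain y where y: "strict_mono_on {..<Suc n} y" "hermite (Suc n) = poly_of_roots (Suc n) y"
    "\<forall>k\<le>n. (-1) ^ (n - k) * poly (hermite n) (y k) > 0" by blast
  obtain p where p: "strict_mono p" and p_y: "\<And>k. k \<le> n \<Longrightarrow> p (Suc k) = y k"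
    and "\<And>k. k \<le> Suc (Suc n) \<Longrightarrow> (-1) ^ (Suc (Suc n) - k) * poly (hermite (Suc (Suc n))) (p k) > 0"
    using hermite_sign_alternation[OF y] by blast
  then obtain z where z_mono: "strict_mono_on {..<Suc (Suc n)} z"
    and z_roots: "hermite (Suc (Suc n)) = poly_of_roots (Suc (Suc n)) z"
    and z_between: "\<And>k. k < Suc (Suc n) \<Longrightarrow> p k < z k \<and> z k < p (Suc k)"
    using alternating_signs_imp_poly_of_roots[OF degree_hermite lead_coeff_hermite] by blast
  have "(-1) ^ (Suc n - k) * poly (hermite (Suc n)) (z k) > 0" if k: "k \<le> Suc n" for k
    unfolding y(2) poly_poly_of_roots
  proof (rule sign_prod_diff)
    fix l assume "l < Suc n"
    then have "p (Suc l) = y l" by (simp add: p_y)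
    moreover have "p (Suc l) \<le> p k" if "l < k"
      using p that by (simp add: strict_mono_less_eq)
    moreover have "p (Suc k) \<le> p (Suc l)" if "k \<le> l"
      using p that by (simp add: strict_mono_less_eq)
    ultimately show "l < k \<Longrightarrow> y l < z k" "k \<le> l \<Longrightarrow> z k < y l"
      using z_between[of k] k by force+
  qed
  then show ?case using z_mono z_roots by blast
qed

lemma sorted_roots_hermite:
  assumes "n > 0"
  shows "strict_mono_on {..<n} (sorted_roots n (hermite n))"
    and "\<forall>i\<ge>n. sorted_roots n (hermite n) i = 0"
    and "hermite n = poly_of_roots n (sorted_roots n (hermite n))"
proof -
  obtain y where y_mono: "strict_mono_on {..<n} y" and y_roots: "hermite n = poly_of_roots n y"
    using hermite_interlacing[of "n - 1"] assms by auto
  define x where "x i = (if i < n then y i else 0)" for i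
  have "poly_of_roots n x = poly_of_roots n y"
    unfolding poly_of_roots_def x_def by (rule prod.cong) auto
  moreover have "strict_mono_on {..<n} x" "\<forall>i\<ge>n. x i = 0"
    using y_mono by (auto simp: x_def strict_mono_on_def)
  ultimately have "sorted_roots n (hermite n) = x" "hermite n = poly_of_roots n x"
    using sorted_roots_poly_of_roots[of n x] y_roots by simp_all
  with \<open>strict_mono_on {..<n} x\<close> \<open>\<forall>i\<ge>n. x i = 0\<close>
  show "strict_mono_on {..<n} (sorted_roots n (hermite n))"
    and "\<forall>i\<ge>n. sorted_roots n (hermite n) i = 0"
    and "hermite n = poly_of_roots n (sorted_roots n (hermite n))" by simp_all
qed

text \<open>By the parity of He n its sorted roots are antisymmetric: x i = - x (n - 1 - i).\<close>
lemma sum_sorted_roots_hermite: "(\<Sum>i<n. sorted_roots n (hermite n) i) = 0"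
proof (cases "n = 0")
  case False
  define x where "x = sorted_roots n (hermite n)"
  from False have "n > 0" by simp
  note x = sorted_roots_hermite[OF this, folded x_def]
  define x' where "x' i = (if i < n then - x (n - Suc i) else 0)" for i
  have "strict_mono_on {..<n} x'"
    using x(1) by (auto simp: x'_def strict_mono_on_def)
  moreover have "poly (hermite n) (x' i) = 0" if "i < n" for i
  proof -
    have "poly (hermite n) (x (n - Suc i)) = 0"
      using that by (subst x(3)) (auto simp: poly_poly_of_roots_eq_0_iff intro!: exI[of _ "n - Suc i"])
    then show ?thesis using that poly_hermite_minus[of n "x (n - Suc i)"] by (simp add: x'_def)
  qed
  ultimately have "x = x'"
    unfolding x_def by (intro sorted_roots_eqI) (auto simp: x'_def)
  have "(\<Sum>i<n. x i) = (\<Sum>i<n. x (n - Suc i))"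
    by (rule sum.reindex_bij_witness[of _ "\<lambda>i. n - Suc i" "\<lambda>i. n - Suc i"]) auto
  also have "\<dots> = - (\<Sum>i<n. x' i)"
    by (simp add: x'_def sum_negf)
  finally show ?thesis using \<open>x = x'\<close> unfolding x_def by simp
qed simp

lemma sum_atMost_double_split:
  fixes T :: "nat \<Rightarrow> 'a::comm_monoid_add"
  shows "(\<Sum>i\<le>2 * m. T i) = (\<Sum>r\<le>m. T (2 * r)) + (\<Sum>r<m. T (2 * r + 1))"
proof (induction m)
  case (Suc m)
  have "(\<Sum>i\<le>2 * Suc m. T i) = (\<Sum>i\<le>2 * m. T i) + T (2 * m + 1) + T (2 * m + 2)"
    by (simp add: algebra_simps)
  with Suc show ?case by (simp add: algebra_simps)
qed simp

lemma sum_inverse_fact_mult_fact: "(\<Sum>r\<le>m. 1 / (fact r * fact (m - r) :: real)) = 2 ^ m / fact m"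
proof -
  have "(\<Sum>r\<le>m. 1 / (fact r * fact (m - r) :: real)) = (\<Sum>r\<le>m. real (m choose r) / fact m)"
    by (intro sum.cong refl) (simp add: binomial_fact field_simps)
  also have "\<dots> = 2 ^ m / fact m"
    by (simp add: sum_divide_distrib[symmetric] flip: of_nat_sum) (simp add: choose_row_sum)
  finally show ?thesis .
qed

lemma ecoeff_hermite_odd: "i \<le> n \<Longrightarrow> odd i \<Longrightarrow> ecoeff n (hermite n) i = 0"
  unfolding ecoeff_def by (simp add: coeff_hermite_eq_0)

lemma ecoeff_hermite_even:
  "2 * r \<le> n \<Longrightarrow> ecoeff n (hermite n) (2 * r) = (-1) ^ r * fact n / (fact r * 2 ^ r * fact (n - 2 * r))"
  unfolding ecoeff_def by (simp add: coeff_hermite)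

lemma ffconv_ecoeff_hermite_odd:
  assumes "k \<le> n" "odd k"
  shows "ffconv_ecoeff n (hermite n) (hermite n) k = 0"
  unfolding ffconv_ecoeff_def
proof (rule sum.neutral, intro ballI)
  fix i assume "i \<in> {..k}"
  with assms have "odd i \<or> odd (k - i)" "i \<le> n" "k - i \<le> n" by auto
  then show "ffconv_weight n i k * ecoeff n (hermite n) i * ecoeff n (hermite n) (k - i) = 0"
    by (metis ecoeff_hermite_odd mult_zero_left mult_zero_right)
qed

text \<open>The sum over r reduces to the binomial row sum.\<close>
lemma ffconv_ecoeff_hermite_even:
  assumes "2 * m \<le> n"
  shows "ffconv_ecoeff n (hermite n) (hermite n) (2 * m) = (-1) ^ m * fact n / (fact (n - 2 * m) * fact m)"
proof -
  define T where "T i = ffconv_weight n i (2 * m) * ecoeff n (hermite n) i * ecoeff n (hermite n) (2 * m - i)"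
    for i
  have "T (2 * r + 1) = 0" if "r < m" for r
    unfolding T_def using ecoeff_hermite_odd[of "2 * r + 1" n] that assms by simp
  moreover have "T (2 * r) = (-1) ^ m * fact n / (fact (n - 2 * m) * 2 ^ m) * (1 / (fact r * fact (m - r)))"
    if r: "r \<le> m" for r
  proof -
    have diff: "2 * m - 2 * r = 2 * (m - r)" by simp
    have signs: "(-1::real) ^ m = (-1) ^ r * (-1) ^ (m - r)" and twos: "(2::real) ^ m = 2 ^ r * 2 ^ (m - r)"
      using r by (simp_all add: power_add[symmetric])
    have e: "ecoeff n (hermite n) (2 * r) = (-1) ^ r * fact n / (fact r * 2 ^ r * fact (n - 2 * r))"
      "ecoeff n (hermite n) (2 * (m - r))
        = (-1) ^ (m - r) * fact n / (fact (m - r) * 2 ^ (m - r) * fact (n - 2 * (m - r)))"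
      using r assms by (simp_all add: ecoeff_hermite_even)
    show ?thesis
      unfolding T_def ffconv_weight_def diff signs twos e by (simp add: field_simps)
  qed
  ultimately have "ffconv_ecoeff n (hermite n) (hermite n) (2 * m)
      = (-1) ^ m * fact n / (fact (n - 2 * m) * 2 ^ m) * (\<Sum>r\<le>m. 1 / (fact r * fact (m - r)))"
    unfolding ffconv_ecoeff_def T_def[symmetric] sum_atMost_double_split by (simp add: sum_distrib_left)
  then show ?thesis by (simp add: sum_inverse_fact_mult_fact)
qed

lemma coeff_ffconv_hermite:
  "coeff (ffconv n (hermite n) (hermite n)) j = sqrt 2 ^ (n - j) * coeff (hermite n) j"
proof (cases "j \<le> n \<and> even (n - j)")
  case True
  then obtain m where m: "n - j = 2 * m" "j = n - 2 * m" "2 * m \<le> n" by (metis evenE diff_diff_cancel diff_le_self)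
  have s2: "sqrt 2 ^ (2 * m) = (2::real) ^ m" by (simp add: power_mult)
  have c: "ffconv_ecoeff n (hermite n) (hermite n) (2 * m) = (-1) ^ m * fact n / (fact j * fact m)"
    using ffconv_ecoeff_hermite_even[OF m(3)] m(2) by simp
  have h: "coeff (hermite n) j = (-1) ^ m * fact n / (fact m * 2 ^ m * fact j)"
    by (rule coeff_hermite) (use m in simp)
  show ?thesis
    using True unfolding coeff_ffconv m(1) s2 c h by (simp add: field_simps)
next
  case False
  then show ?thesis
    using ffconv_ecoeff_hermite_odd[of "n - j" n] by (auto simp: coeff_ffconv coeff_hermite_eq_0)
qed

section \<open>The Hermite pair\<close>

lemma coeff_poly_of_roots_scale:
  "coeff (poly_of_roots n (\<lambda>i. c * x i)) k = c ^ (n - k) * coeff (poly_of_roots n x) k"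
proof (induction n arbitrary: k)
  case 0
  then show ?case by (simp add: poly_of_roots_def coeff_1)
next
  case (Suc n)
  have lin: "coeff (P * [:- a, 1:]) k = (case k of 0 \<Rightarrow> 0 | Suc k' \<Rightarrow> coeff P k') - a * coeff P k"
    for P :: "real poly" and a k
    by (simp add: mult.commute[of P] coeff_pCons split: nat.split)
  show ?case
  proof (cases k)
    case 0
    then show ?thesis unfolding poly_of_roots_Suc lin using Suc by simp
  next
    case (Suc k')
    show ?thesis
    proof (cases "k' < n")
      case True
      then have "c * c ^ (n - Suc k') = c ^ (n - k')" by (simp add: Suc_diff_Suc[symmetric])
      then show ?thesis
        unfolding poly_of_roots_Suc lin using Suc.IH \<open>k = Suc k'\<close> by (simp add: algebra_simps)
    next
      case False
      then have "coeff (poly_of_roots n a) (Suc k') = 0" for a by (simp add: coeff_eq_0)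
      then show ?thesis
        unfolding poly_of_roots_Suc lin using Suc.IH \<open>k = Suc k'\<close> False by simp
    qed
  qed
qed

lemma score_scale: "score n (\<lambda>i. c * \<alpha> i) i = score n \<alpha> i / c"
  unfolding score_def sum_divide_distrib by (intro sum.cong) (simp_all add: right_diff_distrib[symmetric])

lemma Phi_scale:
  assumes "c > 0"
  shows "Phi n p (\<lambda>i. c * \<alpha> i) = Phi n p \<alpha> / c powr p"
  unfolding Phi_def score_scale sum_divide_distrib using assms by (simp add: powr_divide)

lemma Phi_pos:
  assumes "strict_mono_on {..<n} \<alpha>" "n \<ge> 2"
  shows "Phi n p \<alpha> > 0"
proof -
  have "0 < (\<Sum>j\<in>{..<n} - {0}. - (1 / (\<alpha> 0 - \<alpha> j)))"
  proof (rule sum_pos)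
    have "1 \<in> {..<n} - {0}" using assms(2) by simp
    then show "{..<n} - {0} \<noteq> {}" by blast
    show "0 < - (1 / (\<alpha> 0 - \<alpha> j))" if "j \<in> {..<n} - {0}" for j
      using that strict_mono_onD[OF assms(1), of 0 j] by auto
  qed simp
  then have "score n \<alpha> 0 \<noteq> 0"
    unfolding score_def by (simp add: sum_negf)
  then show ?thesis
    unfolding Phi_def using assms(2) by (intro sum_pos2[of _ 0]) auto
qed

lemma hermite_roots_scaled_sorted_roots:
  assumes "n \<ge> 2"
  obtains c where "c > 0" and "\<And>i. hermite_roots n i = (if i < n then c * sorted_roots n (hermite n) i else 0)"
proof -
  define x where "x = sorted_roots n (hermite n)"
  define v where "v = (\<Sum>i<n. (x i)\<^sup>2) / real n"
  have "x 0 \<noteq> x 1"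
    using strict_mono_onD[OF sorted_roots_hermite(1), of n 0 1] assms unfolding x_def by auto
  then have "x 0 \<noteq> 0 \<or> x 1 \<noteq> 0" by auto
  then obtain i where "i \<in> {0, 1}" "x i \<noteq> 0" by blast
  with assms have "(\<Sum>i<n. (x i)\<^sup>2) > 0"
    by (intro sum_pos2[of _ i]) auto
  then have "v > 0" unfolding v_def using assms by simp
  moreover have "hermite_roots n i = (if i < n then (1 / sqrt v) * x i else 0)" for i
    unfolding hermite_roots_def Let_def x_def[symmetric] sum_sorted_roots_hermite[of n, folded x_def]
      v_def by simp
  ultimately show ?thesis using that[of "1 / sqrt v"] unfolding x_def by simp
qed

lemma strict_mono_on_hermite_roots:
  assumes "n \<ge> 2"
  shows "strict_mono_on {..<n} (hermite_roots n)"
proof -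
  obtain c where "c > 0" and h: "\<And>i. hermite_roots n i = (if i < n then c * sorted_roots n (hermite n) i else 0)"
    using hermite_roots_scaled_sorted_roots[OF assms] by blast
  show ?thesis
    using sorted_roots_hermite(1)[of n] assms \<open>c > 0\<close> by (auto simp: h strict_mono_on_def)
qed

lemma hermite_roots_eq_0: "i \<ge> n \<Longrightarrow> hermite_roots n i = 0"
  by (simp add: hermite_roots_def Let_def)

lemma ffconv_hermite_roots:
  assumes "n \<ge> 2"
  shows "ffconv n (poly_of_roots n (hermite_roots n)) (poly_of_roots n (hermite_roots n))
    = poly_of_roots n (\<lambda>i. sqrt 2 * hermite_roots n i)"
proof -
  define x where "x = sorted_roots n (hermite n)"
  obtain c where "c > 0" and h: "\<And>i. hermite_roots n i = (if i < n then c * x i else 0)"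
    using hermite_roots_scaled_sorted_roots[OF assms] unfolding x_def by blast
  have He: "hermite n = poly_of_roots n x" unfolding x_def using assms by (intro sorted_roots_hermite) simp
  have "poly_of_roots n (\<lambda>i. a * hermite_roots n i) = poly_of_roots n (\<lambda>i. (a * c) * x i)" for a
    unfolding poly_of_roots_def h by (rule prod.cong) auto
  from this[of 1] this[of "sqrt 2"]
  have f: "coeff (poly_of_roots n (hermite_roots n)) k = c ^ (n - k) * coeff (hermite n) k"
    and "coeff (poly_of_roots n (\<lambda>i. sqrt 2 * hermite_roots n i)) k
      = (sqrt 2 * c) ^ (n - k) * coeff (hermite n) k" for k
    by (simp_all add: coeff_poly_of_roots_scale He)
  then show ?thesis
    by (intro poly_eqI) (simp add: coeff_ffconv_rescale[OF f f] coeff_ffconv_hermite power_mult_distrib)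
qed

lemma Omega_hermite_roots:
  assumes "n \<ge> 2"
  shows "Omega n (hermite_roots n) (hermite_roots n) = (\<lambda>i. sqrt 2 * hermite_roots n i)"
  unfolding Omega_def ffconv_hermite_roots[OF assms]
  using strict_mono_on_hermite_roots[OF assms] hermite_roots_eq_0
  by (intro sorted_roots_poly_of_roots) (auto simp: strict_mono_on_def)

lemma Ematrix_score_hermite_roots:
  assumes "n \<ge> 2" "i < n"
  shows "(\<Sum>j<n. Ematrix n i j * score n (hermite_roots n) j) = score n (hermite_roots n) i / sqrt 2"
proof -
  have "strict_mono_on {..<n} (\<lambda>i. sqrt 2 * hermite_roots n i)"
    using strict_mono_on_hermite_roots[OF assms(1)] by (simp add: strict_mono_on_def)
  then have "(\<Sum>j<n. Ematrix n i j * score n (hermite_roots n) j) = score n (\<lambda>i. sqrt 2 * hermite_roots n i) i"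
    unfolding Ematrix_def
    using strict_mono_on_imp_inj_on[OF strict_mono_on_hermite_roots[OF assms(1)]]
      hermite_roots_eq_0 ffconv_hermite_roots[OF assms(1)] assms(2)
    by (intro Omega_jacobian_score) auto
  then show ?thesis by (simp add: score_scale)
qed

lemma contraction_ratio_hermite:
  assumes "n \<ge> 2" "p > 0"
  shows "contraction_ratio n p = 2 powr (-1/2)"
proof -
  define S where "S = Phi n p (hermite_roots n)"
  have "S > 0" unfolding S_def using Phi_pos[OF strict_mono_on_hermite_roots[OF assms(1)] assms(1)] .
  have "pnorm n p (\<lambda>i. \<Sum>j<n. Ematrix n i j * score n (hermite_roots n) j) = (S / sqrt 2 powr p) powr (1 / p)"
    unfolding pnorm_def S_def Phi_def sum_divide_distrib
    by (intro arg_cong[where f = "\<lambda>t. t powr (1 / p)"] sum.cong)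
      (simp_all add: Ematrix_score_hermite_roots[OF assms(1)] powr_divide)
  also have "\<dots> = S powr (1 / p) / sqrt 2"
    unfolding powr_divide powr_powr using assms(2) by simp
  finally show ?thesis
    unfolding contraction_ratio_def using \<open>S > 0\<close>
    by (simp add: pnorm_def S_def Phi_def powr_minus_divide powr_half_sqrt)
qed

lemma stam_deficit_hermite_roots:
  assumes "n \<ge> 2" "p > 1"
  shows "stam_deficit n p (hermite_roots n) (hermite_roots n)
    = Phi n p (hermite_roots n) powr (-1 / (p - 1)) * (2 powr (p / (2 * (p - 1))) - 2)"
proof -
  define S where "S = Phi n p (hermite_roots n)"
  have "S > 0" unfolding S_def using Phi_pos[OF strict_mono_on_hermite_roots[OF assms(1)] assms(1)] .
  have sqrt2: "sqrt 2 = (2::real) powr (1 / 2)" by (simp add: powr_half_sqrt)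
  have "(sqrt 2 powr p) powr (-1 / (p - 1)) = 2 powr (- (p / (2 * (p - 1))))"
    unfolding sqrt2 powr_powr using assms(2) by (simp add: field_simps)
  then have "(S / sqrt 2 powr p) powr (-1 / (p - 1)) = S powr (-1 / (p - 1)) * 2 powr (p / (2 * (p - 1)))"
    using \<open>S > 0\<close> by (simp add: powr_divide powr_minus_divide)
  then show ?thesis
    unfolding stam_deficit_def Omega_hermite_roots[OF assms(1)] Phi_scale[OF real_sqrt_gt_zero[OF zero_less_numeral]]
      S_def[symmetric] by (simp add: algebra_simps)
qed

theorem mainTheorem3:
  fixes n :: nat and p :: real
  assumes "n \<ge> 2" and "p > 1"
  shows "contraction_ratio n p = 2 powr (-1/2)
    \<and> (p < 2 \<longrightarrow> stam_deficit n p (hermite_roots n) (hermite_roots n) > 0)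
    \<and> (p = 2 \<longrightarrow> stam_deficit n p (hermite_roots n) (hermite_roots n) = 0)
    \<and> (p > 2 \<longrightarrow> stam_deficit n p (hermite_roots n) (hermite_roots n) < 0
          \<and> \<not> (Phi n p (Omega n (hermite_roots n) (hermite_roots n)) powr (-1 / (p - 1))
                 \<ge> Phi n p (hermite_roots n) powr (-1 / (p - 1))
                   + Phi n p (hermite_roots n) powr (-1 / (p - 1))))"
proof -
  define S where "S = Phi n p (hermite_roots n) powr (-1 / (p - 1))"
  have "Phi n p (hermite_roots n) > 0"
    using Phi_pos[OF strict_mono_on_hermite_roots[OF assms(1)] assms(1)] .
  then have "S > 0" unfolding S_def by simp
  have deficit: "stam_deficit n p (hermite_roots n) (hermite_roots n) = S * (2 powr (p / (2 * (p - 1))) - 2)"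
    unfolding S_def by (rule stam_deficit_hermite_roots[OF assms])
  have "p / (2 * (p - 1)) < 1 \<longleftrightarrow> p > 2" "1 < p / (2 * (p - 1)) \<longleftrightarrow> p < 2"
    using assms(2) by (simp_all add: field_simps)
  then have sign: "2 powr (p / (2 * (p - 1))) < 2 \<longleftrightarrow> p > 2" "2 < 2 powr (p / (2 * (p - 1))) \<longleftrightarrow> p < 2"
    using powr_less_cancel_iff[of 2 "p / (2 * (p - 1))" 1] powr_less_cancel_iff[of 2 1 "p / (2 * (p - 1))"]
    by simp_all
  have "p < 2 \<Longrightarrow> stam_deficit n p (hermite_roots n) (hermite_roots n) > 0"
    and "p = 2 \<Longrightarrow> stam_deficit n p (hermite_roots n) (hermite_roots n) = 0"
    and "p > 2 \<Longrightarrow> stam_deficit n p (hermite_roots n) (hermite_roots n) < 0"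
    using \<open>S > 0\<close> sign unfolding deficit by (simp_all add: mult_pos_neg)
  then show ?thesis
    using contraction_ratio_hermite[OF assms(1)] assms(2) unfolding stam_deficit_def by auto
qed

end
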